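(* Let $\sigma,\eta>0$ and $\mathscr{C}$ be a family of balls as in the context. Let $B\in\mathscr{C}$ and $n\in\{0,1,2,\dots\}$. Suppose $B_1=B(x_1,r_1)\in P^{(n)}$ and $B_2=B(x_2,r_2)$ is a ball of the $(n+4)$-th layer of $B$, i.e. $B_2\in\mathscr{C}$ with $B_2\subset B^{(n+4)}$ and $B_2\not\subset B^{(n+3)}$. Then \[ \operatorname{dist}(B_1,B_2)\geq\max\{\kappa(r_1+r_2),1\},\qquad \kappa:=\sqrt{1+2/\eta^2}-1. \]
   Context: Cover: for constants $\sigma,\eta>0$, $\mathscr{C}$ is a family of closed balls in $\mathbb{R}^3$ with $\bigcup_{B\in\mathscr{C}}B=\mathbb{R}^3$ and $|B|\geq 4\pi/3$ (i.e. radius $\ge1$) for all $B\in\mathscr{C}$, such that (i) each ball in $\mathscr{C}$ intersects at most $\sigma$ balls in $\mathscr{C}$, and (ii) if $B,B'\in\mathscr{C}$ intersect then $\eta^{-1}\le |B|^{1/3}/|B'|^{1/3}\le\eta$. Layers: for $B\in\mathscr{C}$ set $B^{(0)}:=B$, $P^{(0)}:=\{B\}$, and for $n\ge1$, $P^{(n)}:=\{B'\in\mathscr{C}: B'\cap B^{(n-1)}\neq\emptyset\}$, $B^{(n)}:=\bigcup_{B'\in P^{(n)}}B'$. *)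

theory Defs
  imports "HOL-Analysis.Analysis"
begin

definition ball_cover :: "real \<Rightarrow> real \<Rightarrow> (real^3) set set \<Rightarrow> bool" where
  "ball_cover \<sigma> \<eta> \<C> \<longleftrightarrow>
     (\<forall>B\<in>\<C>. \<exists>x r. B = cball x r) \<and>
     \<Union>\<C> = UNIV \<and>
     (\<forall>B\<in>\<C>. measure lebesgue B \<ge> 4 * pi / 3) \<and>
     (\<forall>B\<in>\<C>. finite {B'\<in>\<C>. B \<inter> B' \<noteq> {}} \<and> real (card {B'\<in>\<C>. B \<inter> B' \<noteq> {}}) \<le> \<sigma>) \<and>
     (\<forall>B\<in>\<C>. \<forall>B'\<in>\<C>. B \<inter> B' \<noteq> {} \<longrightarrow>
        inverse \<eta> \<le> measure lebesgue B powr (1/3) / measure lebesgue B' powr (1/3) \<and>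
        measure lebesgue B powr (1/3) / measure lebesgue B' powr (1/3) \<le> \<eta>)"

fun layerB :: "(real^3) set set \<Rightarrow> (real^3) set \<Rightarrow> nat \<Rightarrow> (real^3) set" where
  "layerB \<C> B 0 = B"
| "layerB \<C> B (Suc n) = \<Union>{B'\<in>\<C>. B' \<inter> layerB \<C> B n \<noteq> {}}"

fun layerP :: "(real^3) set set \<Rightarrow> (real^3) set \<Rightarrow> nat \<Rightarrow> (real^3) set set" where
  "layerP \<C> B 0 = {B}"
| "layerP \<C> B (Suc n) = {B'\<in>\<C>. B' \<inter> layerB \<C> B n \<noteq> {}}"

end

theory Submission
  imports Defs
begin

(* A ball meeting B1 lies in B^(n+1), so a ball meeting that one lies in B^(n+2); hence a ball
   meeting B1 and a ball meeting B2 are always disjoint, for otherwise B2 would lie in B^(n+3).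
   Only finitely many balls meet the segment from x1 to x2, so by connectedness some point z of
   it lies both in a ball E meeting B2 and in a ball F = B(c, rho) missing B2. F misses B1 as well,
   rho >= 1, and the volume-ratio condition applied to F, E and E, B2 gives rho >= r2 / eta^2;
   by symmetry we may take r2 to be the larger radius. A ball of radius rho that meets the
   segment but is disjoint from both balls forces |x1 - x2| to exceed the sum of the tangent
   lengths sqrt (r_i^2 + 2 r_i rho), and sqrt (r^2 + 2 r rho) >= max (r sqrt (1 + 2 / eta^2)) (r + 1/2). *)

lemma ball_cover_cball: "ball_cover \<sigma> \<eta> \<C> \<Longrightarrow> G \<in> \<C> \<Longrightarrow> \<exists>x r. G = cball x r"
  unfolding ball_cover_def by blast

lemma ball_cover_covers: "ball_cover \<sigma> \<eta> \<C> \<Longrightarrow> \<exists>G\<in>\<C>. y \<in> G"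
  unfolding ball_cover_def by blast

lemma ball_cover_radius_ge_1:
  assumes "ball_cover \<sigma> \<eta> \<C>" "cball x r \<in> \<C>"
  shows "1 \<le> r"
proof -
  have vol: "4 * pi / 3 \<le> measure lebesgue (cball x r)"
    using assms unfolding ball_cover_def by blast
  have "0 \<le> r"
  proof (rule ccontr)
    assume "\<not> 0 \<le> r"
    then have "cball x r = {}" by simp
    then show False using vol pi_gt_zero by simp
  qed
  with vol have "1 \<le> r ^ 3" by (simp add: content_cball unit_ball_vol_3)
  then show ?thesis
    using power_less_one_iff[OF \<open>0 \<le> r\<close>, of 3] by auto
qed

lemma cube_root_measure_cball:
  assumes "0 < r"
  shows "measure lebesgue (cball (x::real^3) r) powr (1/3) = (4/3 * pi) powr (1/3) * r"
proof -
  have vol: "measure lebesgue (cball x r) = 4/3 * pi * r powr 3"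
    using assms by (simp add: content_cball unit_ball_vol_3 powr_realpow)
  have "(4/3 * pi * r powr 3) powr (1/3) = (4/3 * pi) powr (1/3) * (r powr 3) powr (1/3)"
    by (rule powr_mult)
  also have "(r powr 3) powr (1/3) = r"
    using assms unfolding powr_powr by simp
  finally show ?thesis by (simp only: vol)
qed

lemma ball_cover_radius_ratio:
  assumes "ball_cover \<sigma> \<eta> \<C>" "cball x r \<in> \<C>" "cball y s \<in> \<C>" "cball x r \<inter> cball y s \<noteq> {}"
  shows "s / \<eta> \<le> r"
proof -
  have "0 < r" "0 < s" using assms(1-3) ball_cover_radius_ge_1 by fastforce+
  have "inverse \<eta> \<le> measure lebesgue (cball x r) powr (1/3) / measure lebesgue (cball y s) powr (1/3)"
    using assms unfolding ball_cover_def by blast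
  also have "\<dots> = r / s"
    using \<open>0 < r\<close> \<open>0 < s\<close> by (simp only: cube_root_measure_cball) simp
  finally have "inverse \<eta> * s \<le> r"
    using \<open>0 < s\<close> by (simp add: pos_le_divide_eq)
  then show ?thesis by (simp add: divide_inverse mult.commute)
qed

lemma unit_cball_within_cball:
  fixes c g :: "'a::euclidean_space"
  assumes "1 \<le> \<rho>" "g \<in> cball c \<rho>"
  obtains c' where "g \<in> cball c' 1" "cball c' 1 \<subseteq> cball c \<rho>"
proof
  define c' where "c' = c + (1 - 1/\<rho>) *\<^sub>R (g - c)"
  have "g - c' = (1/\<rho>) *\<^sub>R (g - c)" and "c' - c = (1 - 1/\<rho>) *\<^sub>R (g - c)"
    by (simp_all add: c'_def algebra_simps)
  then have "dist g c' = dist g c / \<rho>" and "dist c' c = (1 - 1/\<rho>) * dist g c"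
    using assms(1) by (simp_all add: dist_norm)
  moreover have "dist g c \<le> \<rho>" using assms(2) by (simp add: dist_commute)
  ultimately have "dist g c' \<le> 1" and "dist c' c \<le> \<rho> - 1"
    using assms(1) mult_left_mono[of "dist g c" \<rho> "1 - 1/\<rho>"] by (simp_all add: algebra_simps)
  then show "g \<in> cball c' 1" "cball c' 1 \<subseteq> cball c \<rho>"
    by (simp_all add: cball_subset_cball_iff dist_commute)
qed

lemma ball_cover_finite_containing:
  assumes "ball_cover \<sigma> \<eta> \<C>"
  shows "finite {G\<in>\<C>. y \<in> G}"
proof -
  obtain E where E: "E \<in> \<C>" "y \<in> E" using ball_cover_covers[OF assms] by blast
  then have "finite {G\<in>\<C>. E \<inter> G \<noteq> {}}" using assms unfolding ball_cover_def by blast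
  then show ?thesis by (rule rev_finite_subset) (use E in blast)
qed

lemma ball_cover_finite_meeting_bounded:
  assumes cov: "ball_cover \<sigma> \<eta> \<C>" and "bounded S"
  shows "finite {G\<in>\<C>. G \<inter> S \<noteq> {}}"
proof -
  obtain w R where S: "S \<subseteq> cball w R" using \<open>bounded S\<close> bounded_subset_cball by blast
  obtain Y where "finite Y" and Y: "cball w (R + 1) \<subseteq> (\<Union>y\<in>Y. ball y 1)"
    by (rule compactE_image[OF compact_cball, of "cball w (R + 1)" "\<lambda>y. ball y 1"]) auto
  have "{G\<in>\<C>. G \<inter> S \<noteq> {}} \<subseteq> (\<Union>y\<in>Y. {G\<in>\<C>. y \<in> G})"
  proof
    fix G assume "G \<in> {G\<in>\<C>. G \<inter> S \<noteq> {}}"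
    then obtain g where G: "G \<in> \<C>" "g \<in> G" "g \<in> S" by auto
    obtain c \<rho> where Gc: "G = cball c \<rho>" using ball_cover_cball[OF cov G(1)] by blast
    have "1 \<le> \<rho>" using ball_cover_radius_ge_1[OF cov] G(1) Gc by blast
    moreover have "g \<in> cball c \<rho>" using G(2) Gc by simp
    ultimately obtain c' where c': "g \<in> cball c' 1" "cball c' 1 \<subseteq> cball c \<rho>"
      by (rule unit_cball_within_cball)
    have "dist w g \<le> R" using G(3) S by auto
    moreover have "dist g c' \<le> 1" using c'(1) by (simp add: dist_commute)
    ultimately have "c' \<in> cball w (R + 1)"
      unfolding mem_cball using dist_triangle[of w c' g] by linarith
    with Y obtain y where "y \<in> Y" "dist y c' < 1" by auto
    then have "y \<in> cball c' 1" by (simp add: dist_commute)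
    with c'(2) Gc have "y \<in> G" by blast
    with \<open>y \<in> Y\<close> G(1) show "G \<in> (\<Union>y\<in>Y. {G\<in>\<C>. y \<in> G})" by blast
  qed
  moreover have "finite (\<Union>y\<in>Y. {G\<in>\<C>. y \<in> G})"
    by (intro finite_UN_I \<open>finite Y\<close> ball_cover_finite_containing[OF cov])
  ultimately show ?thesis by (rule finite_subset)
qed

lemma ball_cover_crossing_point:
  assumes cov: "ball_cover \<sigma> \<eta> \<C>" and T: "connected T" "bounded T"
    and G: "G \<in> \<C>" "G \<inter> T \<noteq> {}" "G \<inter> S = {}" and "T \<inter> S \<noteq> {}"
  obtains E F z where "E \<in> \<C>" "E \<inter> S \<noteq> {}" "F \<in> \<C>" "F \<inter> S = {}" "z \<in> E" "z \<in> F" "z \<in> T"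
proof -
  define N where "N = {H\<in>\<C>. H \<inter> T \<noteq> {}}"
  define P where "P = \<Union>{H\<in>N. H \<inter> S \<noteq> {}}"
  define Q where "Q = \<Union>{H\<in>N. H \<inter> S = {}}"
  have "finite N" unfolding N_def using ball_cover_finite_meeting_bounded[OF cov T(2)] .
  moreover have "closed H" if "H \<in> N" for H
    using ball_cover_cball[OF cov] that unfolding N_def by auto
  ultimately have "closed P" "closed Q" unfolding P_def Q_def by auto
  moreover have "T \<subseteq> P \<union> Q"
  proof
    fix y assume "y \<in> T"
    moreover obtain H where "H \<in> \<C>" "y \<in> H" using ball_cover_covers[OF cov] by blast
    ultimately show "y \<in> P \<union> Q" unfolding P_def Q_def N_def by blast
  qed
  moreover have "P \<inter> T \<noteq> {}"
  proof -
    obtain y where "y \<in> T" "y \<in> S" using \<open>T \<inter> S \<noteq> {}\<close> by blast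
    moreover obtain H where "H \<in> \<C>" "y \<in> H" using ball_cover_covers[OF cov] by blast
    ultimately show ?thesis unfolding P_def N_def by blast
  qed
  moreover have "Q \<inter> T \<noteq> {}" using G unfolding Q_def N_def by blast
  ultimately obtain z where z: "z \<in> P" "z \<in> Q" "z \<in> T"
    using connected_closedD[OF \<open>connected T\<close>, of P Q] by blast
  from z(1) obtain E where "E \<in> \<C>" "E \<inter> S \<noteq> {}" "z \<in> E" unfolding P_def N_def by blast
  moreover from z(2) obtain F where "F \<in> \<C>" "F \<inter> S = {}" "z \<in> F" unfolding Q_def N_def by blast
  ultimately show ?thesis using that z(3) by blast
qed

lemma dist_gt_if_disjoint_cballs:
  fixes x y :: "'a::euclidean_space"
  assumes "cball x r \<inter> cball y s = {}" "0 \<le> r" "0 \<le> s"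
  shows "r + s < dist x y"
proof (rule ccontr)
  assume "\<not> r + s < dist x y"
  have "closed_segment x y \<subseteq> cball x r \<union> cball y s"
  proof
    fix z assume "z \<in> closed_segment x y"
    then have "dist x y = dist x z + dist z y"
      by (simp add: between_mem_segment[symmetric] between)
    then have "dist x z \<le> r \<or> dist y z \<le> s"
      using \<open>\<not> r + s < dist x y\<close> dist_commute[of z y] by linarith
    then show "z \<in> cball x r \<union> cball y s" by simp
  qed
  then have "cball x r \<inter> closed_segment x y = {} \<or> cball y s \<inter> closed_segment x y = {}"
    using assms(1) by (intro connected_closedD) auto
  moreover have "x \<in> cball x r \<inter> closed_segment x y" "y \<in> cball y s \<inter> closed_segment x y"
    using assms(2,3) by auto
  ultimately show False by blast
qed

(* sqrt (r^2 + 2 r rho) = sqrt ((r + rho)^2 - rho^2) is the length of a tangent to a ball of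
   radius rho from a point at distance r + rho from its centre. *)
lemma tangent_length_lt:
  fixes p e :: "'a::real_inner"
  assumes "norm e \<le> \<rho>" "r + \<rho> < norm (p - e)" "0 \<le> r"
  shows "sqrt (r\<^sup>2 + 2 * r * \<rho>) * norm p < (norm p)\<^sup>2 - p \<bullet> e"
proof -
  define t where "t = sqrt (r\<^sup>2 + 2 * r * \<rho>)"
  have "0 \<le> \<rho>" using assms(1) norm_ge_zero order_trans by blast
  then have t2: "t\<^sup>2 = r\<^sup>2 + 2 * r * \<rho>" unfolding t_def using assms(3) by simp
  have "(r + \<rho>)\<^sup>2 < (norm (p - e))\<^sup>2"
    using assms(2,3) \<open>0 \<le> \<rho>\<close> by (intro power_strict_mono) auto
  moreover have "(norm (p - e))\<^sup>2 = (norm p)\<^sup>2 + (norm e)\<^sup>2 - 2 * (p \<bullet> e)"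
    using dot_norm_neg[of p e] by simp
  moreover have "(norm e)\<^sup>2 \<le> \<rho>\<^sup>2" using assms(1) by (simp add: power_mono)
  ultimately have "t\<^sup>2 < (norm p)\<^sup>2 - 2 * (p \<bullet> e)"
    by (simp add: t2 power2_sum)
  moreover have "2 * t * norm p \<le> t\<^sup>2 + (norm p)\<^sup>2"
    using sum_squares_bound[of t "norm p"] by (simp add: power2_eq_square)
  ultimately show ?thesis unfolding t_def by linarith
qed

lemma sqrt_add_lt_dist_if_segment_meets_cball:
  fixes x\<^sub>1 x\<^sub>2 c z :: "'a::real_inner"
  assumes "z \<in> closed_segment x\<^sub>1 x\<^sub>2" "dist z c \<le> \<rho>"
    and "r\<^sub>1 + \<rho> < dist x\<^sub>1 c" "r\<^sub>2 + \<rho> < dist x\<^sub>2 c" "0 \<le> r\<^sub>1" "0 \<le> r\<^sub>2"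
  shows "sqrt (r\<^sub>1\<^sup>2 + 2 * r\<^sub>1 * \<rho>) + sqrt (r\<^sub>2\<^sup>2 + 2 * r\<^sub>2 * \<rho>) < dist x\<^sub>1 x\<^sub>2"
proof -
  obtain u where u: "0 \<le> u" "u \<le> 1" "z = (1 - u) *\<^sub>R x\<^sub>1 + u *\<^sub>R x\<^sub>2"
    using assms(1) unfolding in_segment by blast
  define d where "d = x\<^sub>2 - x\<^sub>1"
  define e where "e = c - z"
  define D where "D = norm d"
  define t\<^sub>1 where "t\<^sub>1 = sqrt (r\<^sub>1\<^sup>2 + 2 * r\<^sub>1 * \<rho>)"
  define t\<^sub>2 where "t\<^sub>2 = sqrt (r\<^sub>2\<^sup>2 + 2 * r\<^sub>2 * \<rho>)"
  have p\<^sub>1: "x\<^sub>1 - z = (- u) *\<^sub>R d" and p\<^sub>2: "x\<^sub>2 - z = (1 - u) *\<^sub>R d"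
    unfolding u(3) d_def by (simp_all add: algebra_simps)
  have e: "norm e \<le> \<rho>" using assms(2) by (simp add: e_def dist_norm norm_minus_commute)
  have "dist x\<^sub>i c = norm ((x\<^sub>i - z) - e)" for x\<^sub>i
    by (simp add: e_def dist_norm)
  then have "t\<^sub>1 * norm (x\<^sub>1 - z) < (norm (x\<^sub>1 - z))\<^sup>2 - (x\<^sub>1 - z) \<bullet> e"
    and "t\<^sub>2 * norm (x\<^sub>2 - z) < (norm (x\<^sub>2 - z))\<^sup>2 - (x\<^sub>2 - z) \<bullet> e"
    unfolding t\<^sub>1_def t\<^sub>2_def using assms(3-6) by (intro tangent_length_lt[OF e]; simp)+
  moreover have "norm (x\<^sub>1 - z) = u * D" "norm (x\<^sub>2 - z) = (1 - u) * D"
    using u(1,2) by (simp_all add: p\<^sub>1 p\<^sub>2 D_def)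
  moreover have "(x\<^sub>1 - z) \<bullet> e = - u * (d \<bullet> e)" "(x\<^sub>2 - z) \<bullet> e = (1 - u) * (d \<bullet> e)"
    by (simp_all add: p\<^sub>1 p\<^sub>2)
  ultimately have "u * (t\<^sub>1 * D) < u * (u * D\<^sup>2 + d \<bullet> e)"
    and "(1 - u) * (t\<^sub>2 * D) < (1 - u) * ((1 - u) * D\<^sup>2 - d \<bullet> e)"
    by (simp_all add: power2_eq_square algebra_simps)
  \<comment> \<open>Dividing by u and 1 - u, the two bounds add up to (t1 + t2) D < D^2.\<close>
  then have "t\<^sub>1 * D < u * D\<^sup>2 + d \<bullet> e" "t\<^sub>2 * D < (1 - u) * D\<^sup>2 - d \<bullet> e"
    using u(1,2) by (auto simp: mult_less_cancel_left)
  then have "(t\<^sub>1 + t\<^sub>2) * D < D * D" by (simp add: algebra_simps power2_eq_square)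
  moreover have "0 \<le> \<rho>" using assms(2) zero_le_dist order_trans by blast
  then have "0 \<le> t\<^sub>1 + t\<^sub>2" using assms(5,6) by (simp add: t\<^sub>1_def t\<^sub>2_def)
  ultimately have "t\<^sub>1 + t\<^sub>2 < D"
    by (metis D_def mult_less_cancel_right norm_ge_zero not_le order_less_le_trans)
  then show ?thesis by (simp add: t\<^sub>1_def t\<^sub>2_def D_def d_def dist_norm norm_minus_commute)
qed

lemma layerP_subset: "B \<in> \<C> \<Longrightarrow> layerP \<C> B n \<subseteq> \<C>"
  by (cases n) auto

lemma layerP_subset_layerB: "A \<in> layerP \<C> B n \<Longrightarrow> A \<subseteq> layerB \<C> B n"
  by (cases n) auto

lemma layerB_Suc_if_meets: "D \<in> \<C> \<Longrightarrow> D \<inter> layerB \<C> B n \<noteq> {} \<Longrightarrow> D \<subseteq> layerB \<C> B (Suc n)"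
  by auto

lemma neighbours_of_layerP_disjoint:
  assumes "B\<^sub>1 \<in> layerP \<C> B n" "B\<^sub>2 \<in> \<C>" "\<not> B\<^sub>2 \<subseteq> layerB \<C> B (n + 3)"
    and "D \<in> \<C>" "E \<in> \<C>" "D \<inter> B\<^sub>1 \<noteq> {}" "E \<inter> B\<^sub>2 \<noteq> {}"
  shows "D \<inter> E = {}"
proof
  show "D \<inter> E \<subseteq> {}"
  proof
    fix y assume "y \<in> D \<inter> E"
    have "D \<inter> layerB \<C> B n \<noteq> {}" using assms(6) layerP_subset_layerB[OF assms(1)] by blast
    with \<open>D \<in> \<C>\<close> have "D \<subseteq> layerB \<C> B (Suc n)" by (rule layerB_Suc_if_meets)
    with \<open>y \<in> D \<inter> E\<close> \<open>E \<in> \<C>\<close> have "E \<subseteq> layerB \<C> B (Suc (Suc n))"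
      by (intro layerB_Suc_if_meets) blast+
    with assms(7) \<open>B\<^sub>2 \<in> \<C>\<close> have "B\<^sub>2 \<subseteq> layerB \<C> B (Suc (Suc (Suc n)))"
      by (intro layerB_Suc_if_meets) blast+
    with assms(3) show "y \<in> {}" by (simp add: numeral_3_eq_3)
  qed
qed simp

lemma ball_cover_separated_cballs_dist_asym:
  fixes x\<^sub>1 x\<^sub>2 :: "real^3"
  assumes cov: "ball_cover \<sigma> \<eta> \<C>" and "0 < \<eta>"
    and B\<^sub>1: "cball x\<^sub>1 r\<^sub>1 \<in> \<C>" and B\<^sub>2: "cball x\<^sub>2 r\<^sub>2 \<in> \<C>"
    and sep: "\<And>D E. D \<in> \<C> \<Longrightarrow> E \<in> \<C> \<Longrightarrow> D \<inter> cball x\<^sub>1 r\<^sub>1 \<noteq> {} \<Longrightarrow>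
                E \<inter> cball x\<^sub>2 r\<^sub>2 \<noteq> {} \<Longrightarrow> D \<inter> E = {}"
  obtains \<rho> where "1 \<le> \<rho>" "r\<^sub>2 / \<eta>\<^sup>2 \<le> \<rho>"
    "sqrt (r\<^sub>1\<^sup>2 + 2 * r\<^sub>1 * \<rho>) + sqrt (r\<^sub>2\<^sup>2 + 2 * r\<^sub>2 * \<rho>) < dist x\<^sub>1 x\<^sub>2"
proof -
  have r: "1 \<le> r\<^sub>1" "1 \<le> r\<^sub>2" using ball_cover_radius_ge_1[OF cov] B\<^sub>1 B\<^sub>2 by blast+
  then have "x\<^sub>1 \<in> cball x\<^sub>1 r\<^sub>1 \<inter> closed_segment x\<^sub>1 x\<^sub>2" "x\<^sub>2 \<in> closed_segment x\<^sub>1 x\<^sub>2 \<inter> cball x\<^sub>2 r\<^sub>2"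
    by simp_all
  then have "cball x\<^sub>1 r\<^sub>1 \<inter> closed_segment x\<^sub>1 x\<^sub>2 \<noteq> {}"
    and "closed_segment x\<^sub>1 x\<^sub>2 \<inter> cball x\<^sub>2 r\<^sub>2 \<noteq> {}"
    and "cball x\<^sub>1 r\<^sub>1 \<inter> cball x\<^sub>2 r\<^sub>2 = {}"
    using sep[OF B\<^sub>1 B\<^sub>2] by blast+
  then obtain E F z where E: "E \<in> \<C>" "E \<inter> cball x\<^sub>2 r\<^sub>2 \<noteq> {}"
    and F: "F \<in> \<C>" "F \<inter> cball x\<^sub>2 r\<^sub>2 = {}" and z: "z \<in> E" "z \<in> F" "z \<in> closed_segment x\<^sub>1 x\<^sub>2"
    using ball_cover_crossing_point[OF cov connected_segment bounded_closed_segment B\<^sub>1] by metis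
  have F\<^sub>1: "F \<inter> cball x\<^sub>1 r\<^sub>1 = {}" using sep[OF F(1) E(1) _ E(2)] z(1,2) by blast
  obtain c \<rho> where Fc: "F = cball c \<rho>" using ball_cover_cball[OF cov F(1)] by blast
  obtain y s where Ec: "E = cball y s" using ball_cover_cball[OF cov E(1)] by blast
  have "1 \<le> \<rho>" using ball_cover_radius_ge_1[OF cov] F(1) Fc by blast
  have "r\<^sub>2 / \<eta> \<le> s" using ball_cover_radius_ratio[OF cov, of y s x\<^sub>2 r\<^sub>2] E B\<^sub>2 Ec by blast
  moreover have "s / \<eta> \<le> \<rho>"
    using ball_cover_radius_ratio[OF cov, of c \<rho> y s] E(1) F(1) Ec Fc z(1,2) by blast
  ultimately have "r\<^sub>2 / \<eta>\<^sup>2 \<le> \<rho>"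
    using \<open>0 < \<eta>\<close> divide_right_mono[of "r\<^sub>2 / \<eta>" s \<eta>] by (simp add: power2_eq_square)
  have "r\<^sub>1 + \<rho> < dist x\<^sub>1 c"
    using dist_gt_if_disjoint_cballs[of x\<^sub>1 r\<^sub>1 c \<rho>] F\<^sub>1 Fc r \<open>1 \<le> \<rho>\<close> by (simp add: Int_commute)
  moreover have "r\<^sub>2 + \<rho> < dist x\<^sub>2 c"
    using dist_gt_if_disjoint_cballs[of x\<^sub>2 r\<^sub>2 c \<rho>] F(2) Fc r \<open>1 \<le> \<rho>\<close> by (simp add: Int_commute)
  moreover have "dist z c \<le> \<rho>" using z(2) Fc by (simp add: dist_commute)
  ultimately show thesis
    using that[OF \<open>1 \<le> \<rho>\<close> \<open>r\<^sub>2 / \<eta>\<^sup>2 \<le> \<rho>\<close>] sqrt_add_lt_dist_if_segment_meets_cball[OF z(3)] r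
    by simp
qed

lemma ball_cover_separated_cballs_dist:
  fixes x\<^sub>1 x\<^sub>2 :: "real^3"
  assumes cov: "ball_cover \<sigma> \<eta> \<C>" and "0 < \<eta>"
    and B\<^sub>1: "cball x\<^sub>1 r\<^sub>1 \<in> \<C>" and B\<^sub>2: "cball x\<^sub>2 r\<^sub>2 \<in> \<C>"
    and sep: "\<And>D E. D \<in> \<C> \<Longrightarrow> E \<in> \<C> \<Longrightarrow> D \<inter> cball x\<^sub>1 r\<^sub>1 \<noteq> {} \<Longrightarrow>
                E \<inter> cball x\<^sub>2 r\<^sub>2 \<noteq> {} \<Longrightarrow> D \<inter> E = {}"
  obtains \<rho> where "1 \<le> \<rho>" "r\<^sub>1 / \<eta>\<^sup>2 \<le> \<rho>" "r\<^sub>2 / \<eta>\<^sup>2 \<le> \<rho>"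
    "sqrt (r\<^sub>1\<^sup>2 + 2 * r\<^sub>1 * \<rho>) + sqrt (r\<^sub>2\<^sup>2 + 2 * r\<^sub>2 * \<rho>) < dist x\<^sub>1 x\<^sub>2"
proof (cases "r\<^sub>1 \<le> r\<^sub>2")
  case True
  then have "r\<^sub>1 / \<eta>\<^sup>2 \<le> r\<^sub>2 / \<eta>\<^sup>2" by (simp add: divide_right_mono)
  then show thesis
    using ball_cover_separated_cballs_dist_asym[OF cov \<open>0 < \<eta>\<close> B\<^sub>1 B\<^sub>2 sep] that by fastforce
next
  case False
  then have "r\<^sub>2 / \<eta>\<^sup>2 \<le> r\<^sub>1 / \<eta>\<^sup>2" by (simp add: divide_right_mono)
  have "D \<inter> E = {}"
    if "D \<in> \<C>" "E \<in> \<C>" "D \<inter> cball x\<^sub>2 r\<^sub>2 \<noteq> {}" "E \<inter> cball x\<^sub>1 r\<^sub>1 \<noteq> {}" for D E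
    using sep[OF that(2,1,4,3)] by blast
  then obtain \<rho> where "1 \<le> \<rho>" "r\<^sub>1 / \<eta>\<^sup>2 \<le> \<rho>"
    and "sqrt (r\<^sub>2\<^sup>2 + 2 * r\<^sub>2 * \<rho>) + sqrt (r\<^sub>1\<^sup>2 + 2 * r\<^sub>1 * \<rho>) < dist x\<^sub>2 x\<^sub>1"
    using ball_cover_separated_cballs_dist_asym[OF cov \<open>0 < \<eta>\<close> B\<^sub>2 B\<^sub>1] by blast
  with \<open>r\<^sub>2 / \<eta>\<^sup>2 \<le> r\<^sub>1 / \<eta>\<^sup>2\<close> show thesis
    using that[of \<rho>] by (simp add: dist_commute add.commute)
qed

lemma mult_sqrt_le_tangent_length:
  assumes "0 \<le> r" "r / \<eta>\<^sup>2 \<le> \<rho>"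
  shows "r * sqrt (1 + 2 / \<eta>\<^sup>2) \<le> sqrt (r\<^sup>2 + 2 * r * \<rho>)"
proof (rule real_le_rsqrt)
  have "(r * sqrt (1 + 2 / \<eta>\<^sup>2))\<^sup>2 = r\<^sup>2 * (1 + 2 / \<eta>\<^sup>2)"
    by (simp add: power_mult_distrib)
  also have "\<dots> = r\<^sup>2 + 2 * r * (r / \<eta>\<^sup>2)"
    by (simp add: algebra_simps power2_eq_square)
  also have "\<dots> \<le> r\<^sup>2 + 2 * r * \<rho>"
    using assms by (intro add_left_mono mult_left_mono) auto
  finally show "(r * sqrt (1 + 2 / \<eta>\<^sup>2))\<^sup>2 \<le> r\<^sup>2 + 2 * r * \<rho>" .
qed

lemma add_half_le_tangent_length:
  assumes "1 \<le> r" "1 \<le> \<rho>"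
  shows "r + 1/2 \<le> sqrt (r\<^sup>2 + 2 * r * \<rho>)"
proof (rule real_le_rsqrt)
  have "r * 1 \<le> r * \<rho>" using assms by (intro mult_left_mono) auto
  moreover have "(r + 1/2)\<^sup>2 = r\<^sup>2 + r + 1/4" by (simp add: power2_eq_square algebra_simps)
  ultimately show "(r + 1/2)\<^sup>2 \<le> r\<^sup>2 + 2 * r * \<rho>"
    using assms(1) by linarith
qed

lemma dist_diff_le_setdist_cballs:
  assumes "0 \<le> r" "0 \<le> s"
  shows "dist x y - r - s \<le> setdist (cball x r) (cball y s)"
proof (rule le_setdistI)
  fix p q assume "p \<in> cball x r" "q \<in> cball y s"
  then show "dist x y - r - s \<le> dist p q"
    using dist_triangle[of x y p] dist_triangle[of p y q] by (simp add: dist_commute)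
qed (use assms in auto)

theorem lemma3p1:
  fixes \<sigma> \<eta> r\<^sub>1 r\<^sub>2 :: real and \<C> :: "(real^3) set set" and B :: "(real^3) set"
    and x\<^sub>1 x\<^sub>2 :: "real^3" and n :: nat
  assumes "\<sigma> > 0" and "\<eta> > 0"
    and "ball_cover \<sigma> \<eta> \<C>"
    and "B \<in> \<C>"
    and "cball x\<^sub>1 r\<^sub>1 \<in> layerP \<C> B n"
    and "cball x\<^sub>2 r\<^sub>2 \<in> \<C>"
    and "cball x\<^sub>2 r\<^sub>2 \<subseteq> layerB \<C> B (n + 4)"
    and "\<not> cball x\<^sub>2 r\<^sub>2 \<subseteq> layerB \<C> B (n + 3)"
  shows "setdist (cball x\<^sub>1 r\<^sub>1) (cball x\<^sub>2 r\<^sub>2)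
           \<ge> max ((sqrt (1 + 2 / \<eta>\<^sup>2) - 1) * (r\<^sub>1 + r\<^sub>2)) 1"
proof -
  have B\<^sub>1: "cball x\<^sub>1 r\<^sub>1 \<in> \<C>" using layerP_subset assms(4,5) by blast
  have r: "1 \<le> r\<^sub>1" "1 \<le> r\<^sub>2" using ball_cover_radius_ge_1 assms(3,6) B\<^sub>1 by blast+
  obtain \<rho> where "1 \<le> \<rho>" "r\<^sub>1 / \<eta>\<^sup>2 \<le> \<rho>" "r\<^sub>2 / \<eta>\<^sup>2 \<le> \<rho>"
    and tangents: "sqrt (r\<^sub>1\<^sup>2 + 2 * r\<^sub>1 * \<rho>) + sqrt (r\<^sub>2\<^sup>2 + 2 * r\<^sub>2 * \<rho>) < dist x\<^sub>1 x\<^sub>2"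
    using ball_cover_separated_cballs_dist[OF assms(3,2) B\<^sub>1 assms(6)]
      neighbours_of_layerP_disjoint[OF assms(5,6,8)] by blast
  have "sqrt (1 + 2 / \<eta>\<^sup>2) * (r\<^sub>1 + r\<^sub>2) < dist x\<^sub>1 x\<^sub>2"
    using tangents mult_sqrt_le_tangent_length[of r\<^sub>1 \<eta> \<rho>] mult_sqrt_le_tangent_length[of r\<^sub>2 \<eta> \<rho>]
      r \<open>r\<^sub>1 / \<eta>\<^sup>2 \<le> \<rho>\<close> \<open>r\<^sub>2 / \<eta>\<^sup>2 \<le> \<rho>\<close> by (simp add: algebra_simps)
  moreover have "r\<^sub>1 + r\<^sub>2 + 1 < dist x\<^sub>1 x\<^sub>2"
    using tangents add_half_le_tangent_length[OF r(1) \<open>1 \<le> \<rho>\<close>]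
      add_half_le_tangent_length[OF r(2) \<open>1 \<le> \<rho>\<close>] by linarith
  ultimately show ?thesis
    using dist_diff_le_setdist_cballs[of r\<^sub>1 r\<^sub>2 x\<^sub>1 x\<^sub>2] r by (simp add: algebra_simps)
qed

end
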